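(* Let $F=(F_0,F_1,F_2)$ be a gapset filtration of genus $g\ge2$ and depth at most $3$ (padded with empty sets). Let $\alpha_1,\alpha_2$ be the maps on gapset filtrations $E=(E_0,E_1,E_2)$ of depth at most $3$ and multiplicity $k$ given by $\alpha_1(E)=(E_0\sqcup\{k\},E_1,E_2)$ and $\alpha_2(E)=(E_0\sqcup\{k\},E_1\sqcup\{k\},E_2)$. Then \begin{itemize} \item $F=\alpha_1(E)$ for some gapset filtration $E$ of depth at most $3$ if and only if $\max F_0>\max F_1$; \item $F=\alpha_2(E)$ for some gapset filtration $E$ of depth at most $3$ if and only if $\max F_0=\max F_1>\max F_2$. \end{itemize}
   Context: A gapset is a finite set $G \subset \mathbb{N}_+$ such that for all $z \in G$, whenever $z=x+y$ with $x,y\in\mathbb{N}_+$, we have $x\in G$ or $y\in G$. Its multiplicity is the least $m\ge1$ with $m\notin G$, its genus is $|G|$, and its depth is $\lceil c/m\rceil$ where $c=\max G+1$ ($c=0$ if $G=\emptyset$). For $m\ge1$, an $m$-filtration is a sequence $(F_0,\dots,F_t)$ with $F_0=[1,m-1]\supseteq F_1\supseteq\dots\supseteq F_t$; it is a gapset filtration if $\bigcup_i(im+F_i)$ is a gapset, and its multiplicity, genus (equal to $\sum_i|F_i|$) and depth are those of that gapset. Convention: $\max\emptyset=0$. *)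

theory Defs
  imports Complex_Main
begin

definition maxz :: "nat set \<Rightarrow> nat" where
  "maxz S = (if S = {} then 0 else Max S)"

definition gapset :: "nat set \<Rightarrow> bool" where
  "gapset G \<longleftrightarrow> finite G \<and> 0 \<notin> G \<and>
     (\<forall>z\<in>G. \<forall>x y. 0 < x \<and> 0 < y \<and> z = x + y \<longrightarrow> x \<in> G \<or> y \<in> G)"

definition gs_multiplicity :: "nat set \<Rightarrow> nat" where
  "gs_multiplicity G = (LEAST m. 1 \<le> m \<and> m \<notin> G)"

definition gs_conductor :: "nat set \<Rightarrow> nat" where
  "gs_conductor G = (if G = {} then 0 else Max G + 1)"

definition gs_genus :: "nat set \<Rightarrow> nat" where
  "gs_genus G = card G"

definition gs_depth :: "nat set \<Rightarrow> nat" where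
  "gs_depth G = nat \<lceil>real (gs_conductor G) / real (gs_multiplicity G)\<rceil>"

definition m_filtration :: "nat \<Rightarrow> nat set list \<Rightarrow> bool" where
  "m_filtration m Fs \<longleftrightarrow> 1 \<le> m \<and> Fs \<noteq> [] \<and> Fs ! 0 = {1..m-1} \<and>
     (\<forall>i. Suc i < length Fs \<longrightarrow> Fs ! Suc i \<subseteq> Fs ! i)"

definition filt_set :: "nat \<Rightarrow> nat set list \<Rightarrow> nat set" where
  "filt_set m Fs = (\<Union>i<length Fs. (\<lambda>x. i * m + x) ` (Fs ! i))"

text \<open>The m of an m-filtration is determined by F_0 = [1,m-1].\<close>
definition filt_m :: "nat set list \<Rightarrow> nat" where
  "filt_m Fs = card (Fs ! 0) + 1"

definition gapset_filtration :: "nat set list \<Rightarrow> bool" where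
  "gapset_filtration Fs \<longleftrightarrow> (\<exists>m. m_filtration m Fs \<and> gapset (filt_set m Fs))"

definition filt_gapset :: "nat set list \<Rightarrow> nat set" where
  "filt_gapset Fs = filt_set (filt_m Fs) Fs"

definition filt_multiplicity :: "nat set list \<Rightarrow> nat" where
  "filt_multiplicity Fs = gs_multiplicity (filt_gapset Fs)"

definition filt_genus :: "nat set list \<Rightarrow> nat" where
  "filt_genus Fs = gs_genus (filt_gapset Fs)"

definition filt_depth :: "nat set list \<Rightarrow> nat" where
  "filt_depth Fs = gs_depth (filt_gapset Fs)"

definition alpha1 :: "nat set list \<Rightarrow> nat set list" where
  "alpha1 E = (let k = filt_multiplicity E in [E ! 0 \<union> {k}, E ! 1, E ! 2])"

definition alpha2 :: "nat set list \<Rightarrow> nat set list" where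
  "alpha2 E = (let k = filt_multiplicity E in [E ! 0 \<union> {k}, E ! 1 \<union> {k}, E ! 2])"

end

theory Submission
  imports Defs
begin

text \<open>
  A gapset filtration with three layers is \<open>[{1..n}, B, C]\<close> with \<open>C \<subseteq> B \<subseteq> {1..n}\<close>; its
  multiplicity is \<open>n + 1\<close> and its depth is automatically at most 3. The gapset condition only
  bites on the top layer: every splitting \<open>a = b + c\<close> of some \<open>a \<in> C\<close> into positive parts
  must have a part in \<open>B\<close>. The parts are smaller than \<open>a \<le> n\<close>, so removing \<open>n\<close> from the
  lower layers preserves this condition. Hence \<open>F\<close> has an \<open>\<alpha>\<^sub>1\<close>-preimage iff \<open>n > 0\<close> and
  \<open>n \<notin> B\<close>, and an \<open>\<alpha>\<^sub>2\<close>-preimage iff \<open>n > 0\<close> and \<open>n \<in> B - C\<close>, which are exactly the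
  stated conditions on the maxima.
\<close>

lemma maxz_atLeastAtMost_1: "maxz {1..n} = n"
  by (cases n) (auto simp: maxz_def intro!: Max_eqI)

lemma maxz_le:
  assumes "S \<subseteq> {1..n}"
  shows "maxz S \<le> n"
  using assms finite_subset[OF assms] by (auto simp: maxz_def)

lemma maxz_less_iff:
  assumes "S \<subseteq> {1..n}"
  shows "maxz S < n \<longleftrightarrow> 0 < n \<and> n \<notin> S"
proof
  assume less: "maxz S < n"
  have "maxz S \<ge> n" if "n \<in> S"
    using that finite_subset[OF assms] by (auto simp: maxz_def)
  with less show "0 < n \<and> n \<notin> S" by auto
next
  assume n: "0 < n \<and> n \<notin> S"
  have "S \<subseteq> {1..n - 1}"
  proof
    fix x assume "x \<in> S"
    with assms n have "x \<in> {1..n}" and "x \<noteq> n" by auto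
    then show "x \<in> {1..n - 1}" by auto
  qed
  then have "maxz S \<le> n - 1" by (rule maxz_le)
  with n show "maxz S < n" by linarith
qed

lemma gs_multiplicity_eqI:
  assumes "{1..n} \<subseteq> G" and "Suc n \<notin> G"
  shows "gs_multiplicity G = Suc n"
  unfolding gs_multiplicity_def
proof (rule Least_equality)
  show "1 \<le> Suc n \<and> Suc n \<notin> G" using assms(2) by simp
next
  fix y assume "1 \<le> y \<and> y \<notin> G"
  with assms(1) show "Suc n \<le> y" by (meson atLeastAtMost_iff not_less_eq_eq subsetD)
qed

lemma gs_depth_le:
  assumes "G \<subseteq> {..<d * gs_multiplicity G}"
  shows "gs_depth G \<le> d"
proof -
  let ?m = "gs_multiplicity G"
  have "gs_conductor G \<le> d * ?m"
  proof (cases "G = {}")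
    case False
    with assms have "Max G < d * ?m"
      by (meson Max_in finite_lessThan finite_subset lessThan_iff subsetD)
    with False show ?thesis by (simp add: gs_conductor_def)
  qed (simp add: gs_conductor_def)
  then have "real (gs_conductor G) / real ?m \<le> d"
    by (cases "?m = 0") (simp_all add: pos_divide_le_eq flip: of_nat_mult)
  then show ?thesis unfolding gs_depth_def by (simp add: ceiling_le_iff nat_le_iff)
qed

lemma length_eq_3_conv: "length xs = 3 \<longleftrightarrow> (\<exists>a b c. xs = [a, b, c])"
  by (auto simp: numeral_3_eq_3 length_Suc_conv)

lemma mem_filt_set_3:
  "z \<in> filt_set m [A, B, C] \<longleftrightarrow>
     z \<in> A \<or> (m \<le> z \<and> z - m \<in> B) \<or> (2 * m \<le> z \<and> z - 2 * m \<in> C)"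
proof -
  have "{..<length [A, B, C]} = {0, 1, 2}" by auto
  then have "filt_set m [A, B, C] = A \<union> (+) m ` B \<union> (+) (2 * m) ` C"
    unfolding filt_set_def by (simp add: mult_2 Un_assoc)
  then show ?thesis by (auto simp: image_iff le_iff_add)
qed

lemma m_filtration_3:
  "m_filtration m [A, B, C] \<longleftrightarrow> 1 \<le> m \<and> A = {1..m - 1} \<and> B \<subseteq> A \<and> C \<subseteq> B"
  unfolding m_filtration_def by (auto simp: less_Suc_eq nth_Cons')

lemma filt_set_3_subset:
  assumes "B \<subseteq> {1..n}" and "C \<subseteq> B"
  shows "filt_set (Suc n) [{1..n}, B, C] \<subseteq> {1..<3 * Suc n}"
proof
  fix z assume "z \<in> filt_set (Suc n) [{1..n}, B, C]"
  with assms consider "z \<in> {1..n}" | "Suc n \<le> z" "z - Suc n \<in> {1..n}"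
    | "2 * Suc n \<le> z" "z - 2 * Suc n \<in> {1..n}"
    by (auto simp: mem_filt_set_3)
  then show "z \<in> {1..<3 * Suc n}" by cases auto
qed

definition splittings_meet :: "nat set \<Rightarrow> nat set \<Rightarrow> bool" where
  "splittings_meet B C \<longleftrightarrow> (\<forall>a\<in>C. \<forall>b c. 0 < b \<and> 0 < c \<and> a = b + c \<longrightarrow> b \<in> B \<or> c \<in> B)"

lemma splittings_meet_Diff_singleton:
  assumes "splittings_meet B C" and "\<forall>a\<in>C. a \<le> x"
  shows "splittings_meet (B - {x}) C"
  using assms unfolding splittings_meet_def by fastforce

lemma gapset_filt_set_3_iff:
  assumes "B \<subseteq> {1..n}" and "C \<subseteq> B"
  shows "gapset (filt_set (Suc n) [{1..n}, B, C]) \<longleftrightarrow> splittings_meet B C"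
    (is "gapset ?G \<longleftrightarrow> _")
proof
  assume "gapset ?G"
  show "splittings_meet B C" unfolding splittings_meet_def
  proof (intro ballI allI impI)
    fix a b c assume "a \<in> C" and bc: "0 < b \<and> 0 < c \<and> a = b + c"
    then have "2 * Suc n + a \<in> ?G" and "2 * Suc n + a = (Suc n + b) + (Suc n + c)"
      by (simp_all add: mem_filt_set_3)
    with \<open>gapset ?G\<close> have "Suc n + b \<in> ?G \<or> Suc n + c \<in> ?G"
      unfolding gapset_def by blast
    moreover have "b < n" "c < n" using \<open>a \<in> C\<close> bc assms by auto
    ultimately show "b \<in> B \<or> c \<in> B" by (auto simp: mem_filt_set_3)
  qed
next
  assume meet: "splittings_meet B C"
  show "gapset ?G" unfolding gapset_def
  proof (intro conjI ballI allI impI)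
    from filt_set_3_subset[OF assms] show "finite ?G" and "0 \<notin> ?G"
      by (auto dest: finite_subset)
  next
    fix z x y assume "z \<in> ?G" and xy: "0 < x \<and> 0 < y \<and> z = x + y"
    show "x \<in> ?G \<or> y \<in> ?G"
    proof (cases "x \<le> n \<or> y \<le> n")
      case True
      with xy have "x \<in> {1..n} \<or> y \<in> {1..n}" by auto
      then show ?thesis unfolding mem_filt_set_3 by blast
    next
      case False
      then obtain b c where x: "x = Suc n + b" and y: "y = Suc n + c"
        by (metis not_less_eq_eq le_iff_add)
      with xy have z: "z = 2 * Suc n + (b + c)" by simp
      with assms(1) have "z \<notin> {1..n}" and "z - Suc n \<notin> B" by auto
      with \<open>z \<in> ?G\<close> z have "b + c \<in> C" unfolding mem_filt_set_3 by simp
      have "b \<in> B \<or> c \<in> B"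
      proof (cases "b = 0 \<or> c = 0")
        case True
        with \<open>b + c \<in> C\<close> assms(2) show ?thesis by auto
      next
        case False
        with meet \<open>b + c \<in> C\<close> show ?thesis unfolding splittings_meet_def by force
      qed
      with x y show ?thesis by (auto simp: mem_filt_set_3)
    qed
  qed
qed

lemma gapset_filtration_length_3_iff:
  "length E = 3 \<and> gapset_filtration E \<longleftrightarrow>
     (\<exists>n B C. E = [{1..n}, B, C] \<and> B \<subseteq> {1..n} \<and> C \<subseteq> B \<and> splittings_meet B C)"
proof
  assume "length E = 3 \<and> gapset_filtration E"
  then obtain A B C m where E: "E = [A, B, C]" and "m_filtration m [A, B, C]"
    and gap: "gapset (filt_set m [A, B, C])"
    unfolding length_eq_3_conv gapset_filtration_def by blast
  then have "1 \<le> m" "A = {1..m - 1}" "B \<subseteq> A" "C \<subseteq> B"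
    unfolding m_filtration_3 by blast+
  moreover obtain n where "m = Suc n"
    using \<open>1 \<le> m\<close> by (cases m) auto
  ultimately show "\<exists>n B C. E = [{1..n}, B, C] \<and> B \<subseteq> {1..n} \<and> C \<subseteq> B \<and> splittings_meet B C"
    using E gap gapset_filt_set_3_iff by auto
next
  assume "\<exists>n B C. E = [{1..n}, B, C] \<and> B \<subseteq> {1..n} \<and> C \<subseteq> B \<and> splittings_meet B C"
  then obtain n B C where E: "E = [{1..n}, B, C]"
    and sub: "B \<subseteq> {1..n}" "C \<subseteq> B" and "splittings_meet B C"
    by blast
  then have "m_filtration (Suc n) E" and "gapset (filt_set (Suc n) E)"
    using gapset_filt_set_3_iff[OF sub] by (simp_all add: m_filtration_3)
  with E show "length E = 3 \<and> gapset_filtration E" by (auto simp: gapset_filtration_def)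
qed

lemma filt_gapset_3: "filt_gapset [{1..n}, B, C] = filt_set (Suc n) [{1..n}, B, C]"
  by (simp add: filt_gapset_def filt_m_def)

lemma filt_multiplicity_3:
  assumes "B \<subseteq> {1..n}" and "C \<subseteq> B"
  shows "filt_multiplicity [{1..n}, B, C] = Suc n"
  unfolding filt_multiplicity_def filt_gapset_3
proof (rule gs_multiplicity_eqI)
  show "{1..n} \<subseteq> filt_set (Suc n) [{1..n}, B, C]" by (auto simp: mem_filt_set_3)
  show "Suc n \<notin> filt_set (Suc n) [{1..n}, B, C]" using assms by (auto simp: mem_filt_set_3)
qed

lemma filt_depth_le_3:
  assumes "length E = 3" and "gapset_filtration E"
  shows "filt_depth E \<le> 3"
proof -
  from assms obtain n B C where E: "E = [{1..n}, B, C]" and sub: "B \<subseteq> {1..n}" "C \<subseteq> B"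
    using gapset_filtration_length_3_iff by blast
  have "filt_gapset E = filt_set (Suc n) [{1..n}, B, C]"
    unfolding E by (rule filt_gapset_3)
  moreover have "gs_multiplicity (filt_gapset E) = Suc n"
    using filt_multiplicity_3[OF sub] unfolding E filt_multiplicity_def .
  ultimately have "filt_gapset E \<subseteq> {..<3 * gs_multiplicity (filt_gapset E)}"
    using filt_set_3_subset[OF sub] by auto
  then show ?thesis unfolding filt_depth_def by (rule gs_depth_le)
qed

lemma alpha1_3:
  assumes "B \<subseteq> {1..n}" and "C \<subseteq> B"
  shows "alpha1 [{1..n}, B, C] = [{1..Suc n}, B, C]"
  unfolding alpha1_def filt_multiplicity_3[OF assms] by (auto simp: atLeastAtMostSuc_conv)

lemma alpha2_3:
  assumes "B \<subseteq> {1..n}" and "C \<subseteq> B"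
  shows "alpha2 [{1..n}, B, C] = [{1..Suc n}, insert (Suc n) B, C]"
  unfolding alpha2_def filt_multiplicity_3[OF assms] by (auto simp: atLeastAtMostSuc_conv)

lemma in_alpha1_image_iff:
  assumes "B \<subseteq> {1..n}" and "C \<subseteq> B" and "splittings_meet B C"
  shows "(\<exists>E. length E = 3 \<and> gapset_filtration E \<and> [{1..n}, B, C] = alpha1 E) \<longleftrightarrow>
    0 < n \<and> n \<notin> B"
proof
  assume "\<exists>E. length E = 3 \<and> gapset_filtration E \<and> [{1..n}, B, C] = alpha1 E"
  then obtain E where "length E = 3 \<and> gapset_filtration E" and "[{1..n}, B, C] = alpha1 E"
    by blast
  then obtain k B' C' where sub: "B' \<subseteq> {1..k}" "C' \<subseteq> B'"
    and eq: "[{1..n}, B, C] = alpha1 [{1..k}, B', C']"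
    unfolding gapset_filtration_length_3_iff by blast
  from eq have "n = Suc k" and "B = B'"
    unfolding alpha1_3[OF sub] by simp_all
  with sub show "0 < n \<and> n \<notin> B" by auto
next
  assume n: "0 < n \<and> n \<notin> B"
  then obtain k where k: "n = Suc k" by (cases n) auto
  with assms(1) n have sub: "B \<subseteq> {1..k}" by (auto simp: atLeastAtMostSuc_conv)
  with assms(2,3) have "length [{1..k}, B, C] = 3 \<and> gapset_filtration [{1..k}, B, C]"
    unfolding gapset_filtration_length_3_iff by blast
  moreover have "[{1..n}, B, C] = alpha1 [{1..k}, B, C]"
    unfolding alpha1_3[OF sub assms(2)] k ..
  ultimately show "\<exists>E. length E = 3 \<and> gapset_filtration E \<and> [{1..n}, B, C] = alpha1 E"
    by blast
qed

lemma in_alpha2_image_iff: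
  assumes "B \<subseteq> {1..n}" and "C \<subseteq> B" and "splittings_meet B C"
  shows "(\<exists>E. length E = 3 \<and> gapset_filtration E \<and> [{1..n}, B, C] = alpha2 E) \<longleftrightarrow>
    0 < n \<and> n \<in> B \<and> n \<notin> C"
proof
  assume "\<exists>E. length E = 3 \<and> gapset_filtration E \<and> [{1..n}, B, C] = alpha2 E"
  then obtain E where "length E = 3 \<and> gapset_filtration E" and "[{1..n}, B, C] = alpha2 E"
    by blast
  then obtain k B' C' where sub: "B' \<subseteq> {1..k}" "C' \<subseteq> B'"
    and eq: "[{1..n}, B, C] = alpha2 [{1..k}, B', C']"
    unfolding gapset_filtration_length_3_iff by blast
  from eq have "n = Suc k" and "B = insert n B'" and "C = C'"
    unfolding alpha2_3[OF sub] by simp_all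
  with sub show "0 < n \<and> n \<in> B \<and> n \<notin> C" by auto
next
  assume n: "0 < n \<and> n \<in> B \<and> n \<notin> C"
  then obtain k where k: "n = Suc k" by (cases n) auto
  with assms(1) have sub: "B - {n} \<subseteq> {1..k}" and "C \<subseteq> B - {n}"
    using assms(2) n by (auto simp: atLeastAtMostSuc_conv)
  moreover have "splittings_meet (B - {n}) C"
    using assms by (intro splittings_meet_Diff_singleton) auto
  ultimately have "length [{1..k}, B - {n}, C] = 3 \<and> gapset_filtration [{1..k}, B - {n}, C]"
    unfolding gapset_filtration_length_3_iff by blast
  moreover have "[{1..n}, B, C] = alpha2 [{1..k}, B - {n}, C]"
    unfolding alpha2_3[OF sub \<open>C \<subseteq> B - {n}\<close>] using n k by auto
  ultimately show "\<exists>E. length E = 3 \<and> gapset_filtration E \<and> [{1..n}, B, C] = alpha2 E"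
    by blast
qed

theorem mainTheorem13:
  fixes F :: "nat set list"
  assumes "length F = 3"
    and "gapset_filtration F"
    and "filt_genus F \<ge> 2"
    and "filt_depth F \<le> 3"
  shows "((\<exists>E. length E = 3 \<and> gapset_filtration E \<and> filt_depth E \<le> 3 \<and> F = alpha1 E)
            \<longleftrightarrow> maxz (F ! 0) > maxz (F ! 1))
       \<and> ((\<exists>E. length E = 3 \<and> gapset_filtration E \<and> filt_depth E \<le> 3 \<and> F = alpha2 E)
            \<longleftrightarrow> maxz (F ! 0) = maxz (F ! 1) \<and> maxz (F ! 1) > maxz (F ! 2))"
proof -
  obtain n B C where F: "F = [{1..n}, B, C]"
    and sub: "B \<subseteq> {1..n}" "C \<subseteq> B" and meet: "splittings_meet B C"
    using assms(1,2) gapset_filtration_length_3_iff by blast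
  have "(\<exists>E. length E = 3 \<and> gapset_filtration E \<and> filt_depth E \<le> 3 \<and> F = alpha1 E)
      \<longleftrightarrow> 0 < n \<and> n \<notin> B"
    using in_alpha1_image_iff[OF sub meet] filt_depth_le_3 unfolding F by blast
  moreover have "(\<exists>E. length E = 3 \<and> gapset_filtration E \<and> filt_depth E \<le> 3 \<and> F = alpha2 E)
      \<longleftrightarrow> 0 < n \<and> n \<in> B \<and> n \<notin> C"
    using in_alpha2_image_iff[OF sub meet] filt_depth_le_3 unfolding F by blast
  moreover have "maxz (F ! 0) = n" and "maxz (F ! 1) \<le> n"
    unfolding F using maxz_atLeastAtMost_1 maxz_le[OF sub(1)] by simp_all
  moreover have "maxz (F ! 1) < n \<longleftrightarrow> 0 < n \<and> n \<notin> B"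
    and "maxz (F ! 2) < n \<longleftrightarrow> 0 < n \<and> n \<notin> C"
    unfolding F using maxz_less_iff sub by auto
  ultimately show ?thesis by auto
qed

end
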